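(* Let $0<\delta<1$, $\tau>0$, $n,M\ge1$, let $\mathbf S\in\mathbb R^{n\times n}$ with $\|\mathbf S\|_{op}\le C_\psi$, let $\boldsymbol\Upsilon=\mathrm{diag}(\nu_1,\dots,\nu_n)$ with $\nu_j>0$, and let $\boldsymbol\eta\sim N(0,\mathbf I_{nM})$. (i) For fixed $K\in[M]$, $\mathbf Z\in\mathcal M(M,K)$ and nonempty $J\subseteq[n]$, there is an event $\Omega_{1\tau}$ with $\mathbb P(\Omega_{1\tau})\ge1-\delta^\tau$ on which $$\|(\boldsymbol\Pi_{\mathbf Z,K}\otimes(\mathbf W_J\boldsymbol\Upsilon\mathbf S))\boldsymbol\eta\|^2\le 2KC_\psi^2\sum_{j\in J}\nu_j^2+3C_\psi^2\big(\max_{j\in J}\nu_j^2\big)\tau\ln(\delta^{-1}).$$ (ii) There is an event $\Omega_{2\tau}$ with $\mathbb P(\Omega_{2\tau})\ge1-\delta^\tau$ on which, simultaneously for all $K\in[M]$, all $\mathbf Z\in\mathcal M(M,K)$ and all nonempty $J\subseteq[n]$ (hence also for any random choice $\hat K,\hat{\mathbf Z},\hat J$), $$\|(\boldsymbol\Pi_{\mathbf Z,K}\otimes(\mathbf W_J\boldsymbol\Upsilon\mathbf S))\boldsymbol\eta\|^2\le 2KC_\psi^2\sum_{j\in J}\nu_j^2+3C_\psi^2\big(\max_{j\in J}\nu_j^2\big)\Big\{M\ln K+|J|\ln\frac{ne}{|J|}+\ln(Mn)+\tau\ln(\delta^{-1})\Big\}.$$ (iii) If in addition $\nu_1\le\nu_2\le\dots\le\nu_n$,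 then in (i) with $J=\{1,\dots,L\}$ the bound reads $2KC_\psi^2\sum_{j=1}^L\nu_j^2+3C_\psi^2\tau\ln(\delta^{-1})\nu_L^2$, and there is an event (again of probability at least $1-\delta^\tau$) on which, simultaneously for all $K\in[M]$, $\mathbf Z\in\mathcal M(M,K)$ and $L\in[n]$, $$\|(\boldsymbol\Pi_{\mathbf Z,K}\otimes(\mathbf W_{\{1,\dots,L\}}\boldsymbol\Upsilon\mathbf S))\boldsymbol\eta\|^2\le 2KC_\psi^2\sum_{j=1}^L\nu_j^2+3C_\psi^2\nu_L^2\big\{M\ln K+\ln(Mn)+\tau\ln(\delta^{-1})\big\}.$$
   Context: $[m]=\{1,\dots,m\}$. $\mathcal{M}(M,K)$ is the set of clustering matrices $\mathbf{Z}\in\{0,1\}^{M\times K}$ having exactly one entry $1$ in each row and at least one entry $1$ in each column. For $\mathbf{Z}\in\mathcal M(M,K)$, $\boldsymbol{\Pi}_{\mathbf{Z},K}=\mathbf{Z}(\mathbf{Z}^T\mathbf{Z})^{-1}\mathbf{Z}^T$. For $J\subseteq[n]$, $\mathbf{W}_J=\mathrm{diag}(w_1,\dots,w_n)$ with $w_j=1$ if $j\in J$ and $w_j=0$ otherwise. $\otimes$ is the Kronecker product, so $\boldsymbol\Pi_{\mathbf Z,K}\otimes(\mathbf W_J\boldsymbol\Upsilon\mathbf S)$ is an $nM\times nM$ matrix. *)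

theory Defs
  imports "HOL-Probability.Probability" "Jordan_Normal_Form.Gauss_Jordan_Elimination"
begin

text \<open>Conventions: all indices are 0-based. Vectors of R^m are JNF vectors of dimension m;
 matrices are JNF matrices. Index (m, j) of R^{nM} = R^M (x) R^n is m*n + j.\<close>

definition sqnorm :: "real vec \<Rightarrow> real" where
  "sqnorm v = (\<Sum>i<dim_vec v. (v $ i)^2)"

definition op_norm :: "real mat \<Rightarrow> real" where
  "op_norm A = Sup {sqrt (sqnorm (A *\<^sub>v v)) | v. v \<in> carrier_vec (dim_col A) \<and> sqnorm v \<le> 1}"

definition kron :: "'a::times mat \<Rightarrow> 'a mat \<Rightarrow> 'a mat" where
  "kron A B = mat (dim_row A * dim_row B) (dim_col A * dim_col B)
     (\<lambda>(i,j). A $$ (i div dim_row B, j div dim_col B) * B $$ (i mod dim_row B, j mod dim_col B))"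

definition clust_mats :: "nat \<Rightarrow> nat \<Rightarrow> real mat set" where
  "clust_mats M K = {Z. Z \<in> carrier_mat M K
      \<and> (\<forall>i<M. \<forall>k<K. Z $$ (i,k) = 0 \<or> Z $$ (i,k) = 1)
      \<and> (\<forall>i<M. card {k. k < K \<and> Z $$ (i,k) = 1} = 1)
      \<and> (\<forall>k<K. \<exists>i<M. Z $$ (i,k) = 1)}"

definition proj_clust :: "real mat \<Rightarrow> real mat" where
  "proj_clust Z = Z * the (mat_inverse (transpose_mat Z * Z)) * transpose_mat Z"

definition W_mat :: "nat \<Rightarrow> nat set \<Rightarrow> real mat" where
  "W_mat n J = mat_diag n (\<lambda>j. if j \<in> J then 1 else 0)"

definition gauss_space :: "nat \<Rightarrow> (nat \<Rightarrow> real) measure" where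
  "gauss_space m = PiM {..<m} (\<lambda>_. density lborel std_normal_density)"

definition quad :: "nat \<Rightarrow> nat \<Rightarrow> real mat \<Rightarrow> (nat \<Rightarrow> real) \<Rightarrow> real mat \<Rightarrow> nat set \<Rightarrow> (nat \<Rightarrow> real) \<Rightarrow> real" where
  "quad n M S \<nu> Z J \<eta> =
     sqnorm (kron (proj_clust Z) (W_mat n J * mat_diag n \<nu> * S) *\<^sub>v vec (n*M) \<eta>)"

end

theory Submission
  imports Defs
begin

text \<open>
  Write B for \<Pi>_Z \<otimes> (W_J \<Upsilon> S), so the quadratic form is |B \<eta>|^2. For any matrix B and
  independent standard Gaussian vectors g and h, E exp(\<mu> |B h|^2) = E exp(\<mu> |B^T g|^2), as both
  sides equal E exp(sqrt(2\<mu>) g^T B h). The operator norm bound on S gives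
  |B^T h|^2 \<le> C\<psi>^2 |V h|^2, where V = U^T \<otimes> W_J \<Upsilon> and U = Z (Z^T Z)^(-1/2), and symmetrising
  once more turns |V h|^2 into the weighted chi-square variable \<Sum>_(c,j) \<nu>_j^2 g_cj^2 with K |J|
  terms. Its moment generating function at \<lambda> = 1 / (3 C\<psi>^2 max_J \<nu>_j^2) is at most
  exp(2 \<lambda> K C\<psi>^2 \<Sum>_J \<nu>_j^2), and Chernoff's bound gives (i). The uniform bounds follow by a
  union bound: there are at most K^M clustering matrices, and the term |J| ln(ne/|J|) pays for
  the (n choose |J|) sets J of a given size.
\<close>

section \<open>Gaussian integrals\<close>

abbreviation std_normal :: "real measure" where
  "std_normal \<equiv> density lborel std_normal_density"

abbreviation std_gauss :: "'i set \<Rightarrow> ('i \<Rightarrow> real) measure" where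
  "std_gauss I \<equiv> PiM I (\<lambda>_. std_normal)"

lemma prob_space_std_normal: "prob_space std_normal"
  by (rule prob_space_normal_density) simp

lemma prob_space_std_gauss: "prob_space (std_gauss I)"
  by (rule prob_space_PiM) (rule prob_space_std_normal)

lemma product_sigma_finite_std_normal: "product_sigma_finite (\<lambda>_::'i. std_normal)"
  unfolding product_sigma_finite_def
  using prob_space_std_normal prob_space_imp_sigma_finite by blast

lemma nn_integral_std_normal:
  "f \<in> borel_measurable borel \<Longrightarrow>
    (\<integral>\<^sup>+x. f x \<partial>std_normal) = (\<integral>\<^sup>+x. ennreal (std_normal_density x) * f x \<partial>lborel)"
  by (subst nn_integral_density) auto

lemma nn_integral_normal_density:
  assumes "0 < \<sigma>"
  shows "(\<integral>\<^sup>+x. ennreal (normal_density \<mu> \<sigma> x) \<partial>lborel) = 1"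
proof -
  interpret prob_space "density lborel (normal_density \<mu> \<sigma>)"
    using assms by (rule prob_space_normal_density)
  show ?thesis
    using emeasure_space_1 by (simp add: emeasure_density)
qed

lemma std_normal_mgf: "(\<integral>\<^sup>+x. ennreal (exp (a*x)) \<partial>std_normal) = ennreal (exp (a^2/2))"
proof -
  have "(\<integral>\<^sup>+x. ennreal (exp (a*x)) \<partial>std_normal)
      = (\<integral>\<^sup>+x. ennreal (std_normal_density x) * ennreal (exp (a*x)) \<partial>lborel)"
    by (rule nn_integral_std_normal) measurable
  also have "\<dots> = (\<integral>\<^sup>+x. ennreal (exp (a^2/2)) * ennreal (normal_density a 1 x) \<partial>lborel)"
  proof (rule nn_integral_cong)
    fix x
    have "std_normal_density x * exp (a*x) = exp (a^2/2) * normal_density a 1 x"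
      unfolding normal_density_def
      by (simp add: exp_add[symmetric] power2_eq_square algebra_simps add_divide_distrib diff_divide_distrib)
    then show "ennreal (std_normal_density x) * ennreal (exp (a*x))
        = ennreal (exp (a^2/2)) * ennreal (normal_density a 1 x)"
      by (simp add: ennreal_mult[symmetric])
  qed
  also have "\<dots> = ennreal (exp (a^2/2))"
    by (subst nn_integral_cmult) (auto simp: nn_integral_normal_density)
  finally show ?thesis .
qed

lemma std_normal_exp_square:
  assumes "0 \<le> b" "b < 1/2"
  shows "(\<integral>\<^sup>+x. ennreal (exp (b*x^2)) \<partial>std_normal) = ennreal (1 / sqrt (1 - 2*b))"
proof -
  define s where "s = 1 / sqrt (1 - 2*b)"
  have pos: "0 < 1 - 2*b" using assms by simp
  then have s: "0 < s" "s^2 = 1/(1 - 2*b)" by (simp_all add: s_def power_divide)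
  have "(\<integral>\<^sup>+x. ennreal (exp (b*x^2)) \<partial>std_normal)
      = (\<integral>\<^sup>+x. ennreal (std_normal_density x) * ennreal (exp (b*x^2)) \<partial>lborel)"
    by (rule nn_integral_std_normal) measurable
  also have "\<dots> = (\<integral>\<^sup>+x. ennreal s * ennreal (normal_density 0 s x) \<partial>lborel)"
  proof (rule nn_integral_cong)
    fix x
    have "s * normal_density 0 s x = exp (- (x^2 / (2 * s^2))) / sqrt (2 * pi)"
      using s(1) by (simp add: normal_density_def real_sqrt_mult)
    also have "\<dots> = std_normal_density x * exp (b*x^2)"
      using pos by (simp add: s(2) std_normal_density_def exp_add[symmetric] field_simps)
    finally show "ennreal (std_normal_density x) * ennreal (exp (b*x^2))
        = ennreal s * ennreal (normal_density 0 s x)"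
      using s(1) by (simp add: ennreal_mult[symmetric])
  qed
  also have "\<dots> = ennreal s"
    using s(1) by (subst nn_integral_cmult) (auto simp: nn_integral_normal_density)
  finally show ?thesis by (simp add: s_def)
qed

lemma std_gauss_mgf:
  assumes "finite I"
  shows "(\<integral>\<^sup>+g. ennreal (exp (\<Sum>i\<in>I. w i * g i)) \<partial>std_gauss I) = ennreal (exp (\<Sum>i\<in>I. (w i)^2/2))"
proof -
  interpret product_sigma_finite "\<lambda>_::'a. std_normal" by (rule product_sigma_finite_std_normal)
  have "(\<integral>\<^sup>+g. ennreal (exp (\<Sum>i\<in>I. w i * g i)) \<partial>std_gauss I)
      = (\<integral>\<^sup>+g. (\<Prod>i\<in>I. (\<lambda>i x. ennreal (exp (w i * x))) i (g i)) \<partial>std_gauss I)"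
    using assms by (intro nn_integral_cong) (simp add: exp_sum prod_ennreal)
  also have "\<dots> = (\<Prod>i\<in>I. (\<integral>\<^sup>+x. ennreal (exp (w i * x)) \<partial>std_normal))"
    by (rule product_nn_integral_prod) (use assms in auto)
  also have "\<dots> = ennreal (exp (\<Sum>i\<in>I. (w i)^2/2))"
    using assms by (simp add: std_normal_mgf exp_sum prod_ennreal)
  finally show ?thesis .
qed

text \<open>Both sides equal E exp(sqrt(2\<mu>) \<Sum>_(i,k) V_ik h_k g_i), integrating out g or h first.\<close>

lemma std_gauss_exp_sq_transpose:
  assumes I: "finite I" and K: "finite K" and \<mu>: "0 \<le> \<mu>"
  shows "(\<integral>\<^sup>+h. ennreal (exp (\<mu> * (\<Sum>i\<in>I. (\<Sum>k\<in>K. V i k * h k)^2))) \<partial>std_gauss K)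
       = (\<integral>\<^sup>+g. ennreal (exp (\<mu> * (\<Sum>k\<in>K. (\<Sum>i\<in>I. V i k * g i)^2))) \<partial>std_gauss I)"
proof -
  define c where "c = sqrt (2*\<mu>)"
  have c2: "c^2 = 2*\<mu>" using \<mu> by (simp add: c_def)
  define F where "F h g = ennreal (exp (\<Sum>i\<in>I. \<Sum>k\<in>K. c * V i k * h k * g i))" for h g
  interpret p1: prob_space "std_gauss K" by (rule prob_space_std_gauss)
  interpret p2: prob_space "std_gauss I" by (rule prob_space_std_gauss)
  interpret pair_sigma_finite "std_gauss K" "std_gauss I"
    by (simp add: pair_sigma_finite_def p1.sigma_finite_measure_axioms p2.sigma_finite_measure_axioms)
  have integrate_g: "(\<integral>\<^sup>+g. F h g \<partial>std_gauss I)
      = ennreal (exp (\<mu> * (\<Sum>i\<in>I. (\<Sum>k\<in>K. V i k * h k)^2)))" for h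
  proof -
    have "(\<integral>\<^sup>+g. F h g \<partial>std_gauss I)
        = (\<integral>\<^sup>+g. ennreal (exp (\<Sum>i\<in>I. (c * (\<Sum>k\<in>K. V i k * h k)) * g i)) \<partial>std_gauss I)"
      unfolding F_def
      by (rule nn_integral_cong) (simp add: sum_distrib_left sum_distrib_right mult.assoc)
    also have "\<dots> = ennreal (exp (\<Sum>i\<in>I. (c * (\<Sum>k\<in>K. V i k * h k))^2/2))"
      by (rule std_gauss_mgf[OF I])
    also have "(\<Sum>i\<in>I. (c * (\<Sum>k\<in>K. V i k * h k))^2/2) = \<mu> * (\<Sum>i\<in>I. (\<Sum>k\<in>K. V i k * h k)^2)"
      unfolding sum_distrib_left[of \<mu>] by (rule sum.cong) (simp_all add: power_mult_distrib c2)
    finally show ?thesis .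
  qed
  have integrate_h: "(\<integral>\<^sup>+h. F h g \<partial>std_gauss K)
      = ennreal (exp (\<mu> * (\<Sum>k\<in>K. (\<Sum>i\<in>I. V i k * g i)^2)))" for g
  proof -
    have "(\<integral>\<^sup>+h. F h g \<partial>std_gauss K)
        = (\<integral>\<^sup>+h. ennreal (exp (\<Sum>k\<in>K. (c * (\<Sum>i\<in>I. V i k * g i)) * h k)) \<partial>std_gauss K)"
      unfolding F_def
      by (rule nn_integral_cong) (simp add: sum_distrib_left sum_distrib_right mult_ac sum.swap[of _ I])
    also have "\<dots> = ennreal (exp (\<Sum>k\<in>K. (c * (\<Sum>i\<in>I. V i k * g i))^2/2))"
      by (rule std_gauss_mgf[OF K])
    also have "(\<Sum>k\<in>K. (c * (\<Sum>i\<in>I. V i k * g i))^2/2) = \<mu> * (\<Sum>k\<in>K. (\<Sum>i\<in>I. V i k * g i)^2)"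
      unfolding sum_distrib_left[of \<mu>] by (rule sum.cong) (simp_all add: power_mult_distrib c2)
    finally show ?thesis .
  qed
  have "case_prod F \<in> borel_measurable (std_gauss K \<Otimes>\<^sub>M std_gauss I)"
    unfolding F_def by measurable
  then have "(\<integral>\<^sup>+h. (\<integral>\<^sup>+g. F h g \<partial>std_gauss I) \<partial>std_gauss K)
      = (\<integral>\<^sup>+g. (\<integral>\<^sup>+h. F h g \<partial>std_gauss K) \<partial>std_gauss I)"
    by (rule Fubini'[symmetric])
  then show ?thesis
    by (simp add: integrate_g integrate_h)
qed

lemma inverse_sqrt_one_minus_le_exp:
  fixes u :: real
  assumes "0 \<le> u" "u \<le> 2/3"
  shows "1 / sqrt (1 - u) \<le> exp u"
proof -
  have u_sq: "u*u \<le> 4/9" using mult_mono[of u "2/3" u "2/3"] assms by auto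
  have "u^3 \<le> u * (2/3)^2" using mult_left_mono[OF u_sq, of u] assms
    by (simp add: power3_eq_cube mult.assoc power2_eq_square)
  then have "1 \<le> (1-u) * (1 + 2*u + (2*u)^2/2)" using assms
    by (simp add: algebra_simps power2_eq_square power3_eq_cube)
  also have "\<dots> \<le> (1-u) * exp (2*u)"
    using assms by (intro mult_left_mono exp_lower_Taylor_quadratic) auto
  also have "\<dots> = (sqrt (1-u) * exp u)^2"
    using assms by (simp add: power_mult_distrib exp_double)
  finally have "1 \<le> sqrt (1-u) * exp u"
    using assms by (intro power2_le_imp_le[of 1]) auto
  moreover have "0 < sqrt (1-u)" using assms by simp
  ultimately show ?thesis by (simp add: pos_divide_le_eq mult.commute)
qed

lemma std_gauss_exp_weighted_sq_le:
  assumes I: "finite I" and a: "\<And>i. i \<in> I \<Longrightarrow> 0 \<le> a i" and \<mu>: "0 \<le> \<mu>"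
    and small: "\<And>i. i \<in> I \<Longrightarrow> 2*\<mu>*a i \<le> 2/3"
  shows "(\<integral>\<^sup>+g. ennreal (exp (\<mu> * (\<Sum>i\<in>I. a i * (g i)^2))) \<partial>std_gauss I)
    \<le> ennreal (exp (2*\<mu>*(\<Sum>i\<in>I. a i)))"
proof -
  interpret product_sigma_finite "\<lambda>_::'a. std_normal" by (rule product_sigma_finite_std_normal)
  have b: "0 \<le> \<mu>*a i" "2*(\<mu>*a i) \<le> 2/3" "2*(\<mu>*a i) < 1" "2*(\<mu>*a i) \<le> 1" if "i \<in> I" for i
    using a[OF that] \<mu> small[OF that] by (simp_all add: mult.assoc)
  have "(\<integral>\<^sup>+g. ennreal (exp (\<mu> * (\<Sum>i\<in>I. a i * (g i)^2))) \<partial>std_gauss I)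
      = (\<integral>\<^sup>+g. (\<Prod>i\<in>I. (\<lambda>i x. ennreal (exp ((\<mu> * a i) * x^2))) i (g i)) \<partial>std_gauss I)"
    using I by (intro nn_integral_cong) (simp add: exp_sum prod_ennreal sum_distrib_left mult.assoc)
  also have "\<dots> = (\<Prod>i\<in>I. (\<integral>\<^sup>+x. ennreal (exp ((\<mu> * a i) * x^2)) \<partial>std_normal))"
    by (rule product_nn_integral_prod) (use I in auto)
  also have "\<dots> = (\<Prod>i\<in>I. ennreal (1 / sqrt (1 - 2*(\<mu> * a i))))"
    using b by (intro prod.cong refl std_normal_exp_square) (auto simp: mult.commute)
  also have "\<dots> = ennreal (\<Prod>i\<in>I. 1 / sqrt (1 - 2*(\<mu> * a i)))"
    using b by (intro prod_ennreal) simp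
  also have "\<dots> \<le> ennreal (\<Prod>i\<in>I. exp (2*(\<mu>*a i)))"
    using b by (intro ennreal_leI prod_mono conjI inverse_sqrt_one_minus_le_exp) auto
  also have "\<dots> = ennreal (exp (2*\<mu>*(\<Sum>i\<in>I. a i)))"
    using I by (simp add: exp_sum sum_distrib_left mult.assoc)
  finally show ?thesis .
qed

section \<open>Operator norm\<close>

lemma sqnorm_vec: "sqnorm (vec n f) = (\<Sum>i<n. (f i)^2)"
  by (simp add: sqnorm_def)

lemma sqnorm_mult_mat_vec:
  assumes "S \<in> carrier_mat m n"
  shows "sqnorm (S *\<^sub>v vec n f) = (\<Sum>i<m. (\<Sum>j<n. S $$ (i,j) * f j)^2)"
  using assms by (simp add: sqnorm_def scalar_prod_def atLeast0LessThan row_def)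

lemma op_norm_set_bdd_above:
  assumes S: "S \<in> carrier_mat m n"
  shows "bdd_above {sqrt (sqnorm (S *\<^sub>v v)) | v. v \<in> carrier_vec (dim_col S) \<and> sqnorm v \<le> 1}"
  unfolding bdd_above_def
proof (intro exI[of _ "sqrt (\<Sum>i<m. (\<Sum>j<n. \<bar>S $$ (i,j)\<bar>)^2)"] ballI)
  fix x assume "x \<in> {sqrt (sqnorm (S *\<^sub>v v)) | v. v \<in> carrier_vec (dim_col S) \<and> sqnorm v \<le> 1}"
  then obtain v where v: "v \<in> carrier_vec n" "sqnorm v \<le> 1" and x: "x = sqrt (sqnorm (S *\<^sub>v v))"
    using S by auto
  have v_le_1: "\<bar>v $ j\<bar> \<le> 1" if "j < n" for j
  proof -
    have "(v $ j)^2 \<le> (\<Sum>i<n. (v $ i)^2)" using that by (intro member_le_sum) auto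
    also have "\<dots> \<le> 1" using v by (simp add: sqnorm_def)
    finally show ?thesis by (simp add: abs_square_le_1)
  qed
  have "sqnorm (S *\<^sub>v v) = (\<Sum>i<m. (\<Sum>j<n. S $$ (i,j) * v $ j)^2)"
    using sqnorm_mult_mat_vec[OF S, of "\<lambda>j. v $ j"] v by (metis eq_vecI dim_vec index_vec carrier_vecD)
  also have "\<dots> \<le> (\<Sum>i<m. (\<Sum>j<n. \<bar>S $$ (i,j)\<bar>)^2)"
  proof (intro sum_mono)
    fix i
    have "\<bar>\<Sum>j<n. S $$ (i,j) * v $ j\<bar> \<le> (\<Sum>j<n. \<bar>S $$ (i,j) * v $ j\<bar>)" by (rule sum_abs)
    also have "\<dots> \<le> (\<Sum>j<n. \<bar>S $$ (i,j)\<bar>)"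
      using v_le_1 by (intro sum_mono) (auto simp: abs_mult intro: mult_left_le)
    finally show "(\<Sum>j<n. S $$ (i,j) * v $ j)^2 \<le> (\<Sum>j<n. \<bar>S $$ (i,j)\<bar>)^2"
      using power_mono[of "\<bar>\<Sum>j<n. S $$ (i,j) * v $ j\<bar>" _ 2] by simp
  qed
  finally show "x \<le> sqrt (\<Sum>i<m. (\<Sum>j<n. \<bar>S $$ (i,j)\<bar>)^2)" unfolding x by simp
qed

lemma sqnorm_le_op_norm:
  assumes S: "S \<in> carrier_mat m n" and v: "v \<in> carrier_vec n" "sqnorm v \<le> 1"
  shows "sqrt (sqnorm (S *\<^sub>v v)) \<le> op_norm S"
  unfolding op_norm_def using S v by (intro cSup_upper op_norm_set_bdd_above[OF S]) auto

lemma sum_sq_mult_le_op_norm: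
  assumes S: "S \<in> carrier_mat m n" and C: "op_norm S \<le> C"
  shows "(\<Sum>i<m. (\<Sum>j<n. S $$ (i,j) * f j)^2) \<le> C^2 * (\<Sum>j<n. (f j)^2)"
proof -
  define t where "t = (\<Sum>j<n. (f j)^2)"
  have "0 \<le> t" unfolding t_def by (intro sum_nonneg) auto
  show ?thesis
  proof (cases "t = 0")
    case True
    then have "\<forall>j<n. f j = 0" unfolding t_def by (simp add: sum_nonneg_eq_0_iff)
    then show ?thesis by simp
  next
    case False
    with \<open>0 \<le> t\<close> have t: "0 < t" by simp
    define g where "g j = f j / sqrt t" for j
    have "sqnorm (vec n g) = 1"
      using t by (simp add: sqnorm_vec g_def power_divide t_def sum_divide_distrib[symmetric])
    then have "sqrt (sqnorm (S *\<^sub>v vec n g)) \<le> C"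
      using sqnorm_le_op_norm[OF S, of "vec n g"] C by simp
    then have "sqnorm (S *\<^sub>v vec n g) \<le> C^2"
      by (metis real_sqrt_le_iff real_sqrt_pow2_iff real_sqrt_power sqrt_le_D)
    moreover have "sqnorm (S *\<^sub>v vec n g) = (\<Sum>i<m. (\<Sum>j<n. S $$ (i,j) * f j)^2) / t"
      using t by (simp add: sqnorm_mult_mat_vec[OF S] g_def sum_divide_distrib[symmetric] power_divide)
    ultimately show ?thesis using t by (simp add: t_def divide_le_eq)
  qed
qed

text \<open>By Cauchy-Schwarz, |S^T y|^2 = <y, S S^T y> \<le> |y| C |S^T y|.\<close>

lemma sum_sq_mult_transpose_le_op_norm:
  assumes S: "S \<in> carrier_mat m n" and C: "op_norm S \<le> C"
  shows "(\<Sum>j<n. (\<Sum>i<m. S $$ (i,j) * y i)^2) \<le> C^2 * (\<Sum>i<m. (y i)^2)"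
proof -
  define z where "z j = (\<Sum>i<m. S $$ (i,j) * y i)" for j
  define Z where "Z = (\<Sum>j<n. (z j)^2)"
  define Y where "Y = (\<Sum>i<m. (y i)^2)"
  have "0 \<le> Z" "0 \<le> Y" unfolding Z_def Y_def by (auto intro: sum_nonneg)
  have "Z = (\<Sum>j<n. z j * (\<Sum>i<m. S $$ (i,j) * y i))"
    unfolding Z_def z_def by (simp add: power2_eq_square)
  also have "\<dots> = (\<Sum>i<m. y i * (\<Sum>j<n. S $$ (i,j) * z j))"
    by (simp only: sum_distrib_left) (subst sum.swap, simp add: mult_ac)
  finally have "Z^2 \<le> Y * (\<Sum>i<m. (\<Sum>j<n. S $$ (i,j) * z j)^2)"
    unfolding Y_def by (simp only: Cauchy_Schwarz_ineq_sum)
  also have "\<dots> \<le> Y * (C^2 * Z)"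
    unfolding Z_def using \<open>0 \<le> Y\<close> by (intro mult_left_mono sum_sq_mult_le_op_norm[OF S C])
  finally have "Z * Z \<le> (Y * C^2) * Z" by (simp add: power2_eq_square mult_ac)
  then have "Z \<le> Y * C^2"
    using \<open>0 \<le> Z\<close> \<open>0 \<le> Y\<close> by (cases "Z = 0") (auto intro: mult_right_le_imp_le)
  then show ?thesis unfolding Z_def Y_def z_def by (simp add: mult.commute)
qed

lemma op_norm_le_0_imp_zero:
  assumes S: "S \<in> carrier_mat m n" and C: "op_norm S \<le> 0" and ij: "i < m" "j < n"
  shows "S $$ (i,j) = 0"
proof -
  have "(\<Sum>i<m. (\<Sum>k<n. S $$ (i,k) * (if k = j then 1 else 0))^2)
      \<le> 0^2 * (\<Sum>k<n. (if k = j then (1::real) else 0)^2)"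
    by (rule sum_sq_mult_le_op_norm[OF S C])
  then have "(\<Sum>i<m. (S $$ (i,j))^2) = 0"
    using ij by (simp add: if_distrib sum_nonneg antisym cong: if_cong)
  then show ?thesis using ij by (simp add: sum_nonneg_eq_0_iff)
qed

section \<open>Clustering matrices\<close>

definition cluster_of :: "real mat \<Rightarrow> nat \<Rightarrow> nat \<Rightarrow> nat" where
  "cluster_of Z K i = (THE k. k < K \<and> Z $$ (i,k) = 1)"

definition cluster_size :: "real mat \<Rightarrow> nat \<Rightarrow> nat \<Rightarrow> nat \<Rightarrow> nat" where
  "cluster_size Z M K c = card {i. i < M \<and> cluster_of Z K i = c}"

lemma clust_mats_carrier: "Z \<in> clust_mats M K \<Longrightarrow> Z \<in> carrier_mat M K"
  unfolding clust_mats_def by auto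

lemma
  assumes Z: "Z \<in> clust_mats M K" and i: "i < M"
  shows cluster_of_less: "cluster_of Z K i < K"
    and clust_mats_entry: "\<And>k. k < K \<Longrightarrow> Z $$ (i,k) = (if k = cluster_of Z K i then 1 else 0)"
proof -
  from Z i have "card {k. k < K \<and> Z $$ (i,k) = 1} = 1" unfolding clust_mats_def by auto
  then obtain k0 where k0: "{k. k < K \<and> Z $$ (i,k) = 1} = {k0}" by (rule card_1_singletonE)
  then have cl: "cluster_of Z K i = k0" unfolding cluster_of_def by (intro the_equality) auto
  from k0 show "cluster_of Z K i < K" unfolding cl by auto
  fix k assume k: "k < K"
  have "Z $$ (i,k) = 0 \<or> Z $$ (i,k) = 1" using Z i k unfolding clust_mats_def by auto
  then show "Z $$ (i,k) = (if k = cluster_of Z K i then 1 else 0)" using k0 k cl by auto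
qed

lemma cluster_size_pos:
  assumes Z: "Z \<in> clust_mats M K" and c: "c < K"
  shows "0 < cluster_size Z M K c"
proof -
  from Z c obtain i where i: "i < M" "Z $$ (i,c) = 1" unfolding clust_mats_def by blast
  then have "cluster_of Z K i = c" using clust_mats_entry[OF Z i(1) c] by (auto split: if_splits)
  with i have "i \<in> {i. i < M \<and> cluster_of Z K i = c}" by auto
  then show ?thesis unfolding cluster_size_def by (subst card_gt_0_iff) auto
qed

lemma sum_over_clusters:
  assumes Z: "Z \<in> clust_mats M K"
  shows "(\<Sum>i<M. F (cluster_of Z K i) / real (cluster_size Z M K (cluster_of Z K i))) = (\<Sum>c<K. F c)"
proof -
  have "(\<Sum>i<M. F (cluster_of Z K i) / real (cluster_size Z M K (cluster_of Z K i)))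
      = (\<Sum>c<K. \<Sum>i\<in>{i. i \<in> {..<M} \<and> cluster_of Z K i = c}.
           F (cluster_of Z K i) / real (cluster_size Z M K (cluster_of Z K i)))"
    using cluster_of_less[OF Z] by (intro sum.group[symmetric]) auto
  also have "\<dots> = (\<Sum>c<K. real (cluster_size Z M K c) * (F c / real (cluster_size Z M K c)))"
    by (intro sum.cong refl) (simp add: cluster_size_def)
  also have "\<dots> = (\<Sum>c<K. F c)"
    using cluster_size_pos[OF Z] by (intro sum.cong refl) simp
  finally show ?thesis .
qed

lemma clust_gram:
  assumes Z: "Z \<in> clust_mats M K"
  shows "transpose_mat Z * Z = mat_diag K (\<lambda>c. real (cluster_size Z M K c))"
proof (rule eq_matI)
  have ZC: "Z \<in> carrier_mat M K" by (rule clust_mats_carrier[OF Z])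
  then show "dim_row (transpose_mat Z * Z) = dim_row (mat_diag K (\<lambda>c. real (cluster_size Z M K c)))"
    "dim_col (transpose_mat Z * Z) = dim_col (mat_diag K (\<lambda>c. real (cluster_size Z M K c)))"
    by (auto simp: mat_diag_def)
  fix c c' assume "c < dim_row (mat_diag K (\<lambda>c. real (cluster_size Z M K c)))"
    "c' < dim_col (mat_diag K (\<lambda>c. real (cluster_size Z M K c)))"
  then have c: "c < K" "c' < K" by (auto simp: mat_diag_def)
  have "(transpose_mat Z * Z) $$ (c,c') = (\<Sum>i<M. Z $$ (i,c) * Z $$ (i,c'))"
    using ZC c by (simp add: scalar_prod_def atLeast0LessThan)
  also have "\<dots> = (\<Sum>i<M. if cluster_of Z K i = c \<and> c = c' then 1 else 0)"
    using c by (intro sum.cong refl) (auto simp: clust_mats_entry[OF Z])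
  also have "\<dots> = (if c = c' then real (cluster_size Z M K c) else 0)"
    by (auto simp: sum.If_cases cluster_size_def Int_def conj_commute)
  finally show "(transpose_mat Z * Z) $$ (c,c') = mat_diag K (\<lambda>c. real (cluster_size Z M K c)) $$ (c,c')"
    using c by (simp add: mat_diag_def)
qed

lemma mat_inverse_diag:
  assumes d: "\<And>i. i < n \<Longrightarrow> d i \<noteq> (0::'a::field)"
  shows "the (mat_inverse (mat_diag n d)) = mat_diag n (\<lambda>i. inverse (d i))"
proof -
  let ?A = "mat_diag n d" and ?B = "mat_diag n (\<lambda>i. inverse (d i))"
  have AB: "?A * ?B = 1\<^sub>m n" "?B * ?A = 1\<^sub>m n"
    unfolding mat_diag_diag using d by (auto intro!: eq_matI simp: mat_diag_def)
  then have "?A \<in> Units (ring_mat TYPE('a) n ())"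
    unfolding Units_def ring_mat_def by (auto intro!: bexI[of _ ?B])
  then obtain B where B: "mat_inverse ?A = Some B"
    by (cases "mat_inverse ?A") (auto dest: mat_inverse(1)[OF mat_diag_dim])
  from mat_inverse(2)[OF mat_diag_dim B] have AB': "?A * B = 1\<^sub>m n" "B \<in> carrier_mat n n" by auto
  have "B = (?B * ?A) * B" unfolding AB(2) using AB'(2) by simp
  also have "\<dots> = ?B * (?A * B)" using AB'(2) by (intro assoc_mult_mat) (auto simp: mat_diag_def)
  also have "\<dots> = ?B" unfolding AB'(1) by (rule right_mult_one_mat[OF mat_diag_dim])
  finally show ?thesis using B by simp
qed

lemma proj_clust_carrier: "Z \<in> clust_mats M K \<Longrightarrow> proj_clust Z \<in> carrier_mat M M"
  unfolding proj_clust_def by (auto dest!: clust_mats_carrier)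

lemma proj_clust_entry:
  assumes Z: "Z \<in> clust_mats M K" and i: "i < M" and i': "i' < M"
  shows "proj_clust Z $$ (i,i') =
    (if cluster_of Z K i = cluster_of Z K i' then 1 / real (cluster_size Z M K (cluster_of Z K i)) else 0)"
proof -
  have ZC: "Z \<in> carrier_mat M K" by (rule clust_mats_carrier[OF Z])
  let ?f = "\<lambda>c. 1 / real (cluster_size Z M K c)"
  have "the (mat_inverse (transpose_mat Z * Z)) = mat_diag K ?f"
    unfolding clust_gram[OF Z] using cluster_size_pos[OF Z]
    by (subst mat_inverse_diag) (auto simp: field_simps)
  then have "proj_clust Z $$ (i,i') = (\<Sum>c<K. (Z $$ (i,c) * ?f c) * Z $$ (i',c))"
    unfolding proj_clust_def using ZC i i'
    by (simp add: mat_diag_mult_right[OF ZC] scalar_prod_def atLeast0LessThan)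
  also have "\<dots> = (\<Sum>c<K. if c = cluster_of Z K i then (if cluster_of Z K i = cluster_of Z K i' then ?f c else 0) else 0)"
    using i i' by (intro sum.cong refl) (auto simp: clust_mats_entry[OF Z])
  also have "\<dots> = (if cluster_of Z K i = cluster_of Z K i' then ?f (cluster_of Z K i) else 0)"
    using cluster_of_less[OF Z i] by simp
  finally show ?thesis .
qed

lemma sum_proj_clust:
  assumes Z: "Z \<in> clust_mats M K" and i': "i' < M"
  shows "(\<Sum>i<M. proj_clust Z $$ (i,i') * x i) =
    (\<Sum>i<M. if cluster_of Z K i = cluster_of Z K i' then x i else 0) / real (cluster_size Z M K (cluster_of Z K i'))"
  unfolding sum_divide_distrib using i' by (intro sum.cong refl) (auto simp: proj_clust_entry[OF Z])

lemma finite_clust_mats: "finite (clust_mats M K)"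
  and card_clust_mats_le: "card (clust_mats M K) \<le> K^M"
proof -
  define f where "f Z = restrict (cluster_of Z K) {..<M}" for Z
  have inj: "inj_on f (clust_mats M K)"
  proof (rule inj_onI)
    fix Z Z' assume Z: "Z \<in> clust_mats M K" and Z': "Z' \<in> clust_mats M K" and f: "f Z = f Z'"
    have cl: "cluster_of Z K i = cluster_of Z' K i" if "i < M" for i
      using fun_cong[OF f, of i] that by (simp add: f_def)
    show "Z = Z'"
    proof (rule eq_matI)
      show "dim_row Z = dim_row Z'" "dim_col Z = dim_col Z'"
        using clust_mats_carrier[OF Z] clust_mats_carrier[OF Z'] by auto
      fix i k assume "i < dim_row Z'" "k < dim_col Z'"
      then have ik: "i < M" "k < K" using clust_mats_carrier[OF Z'] by auto
      show "Z $$ (i,k) = Z' $$ (i,k)"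
        using clust_mats_entry[OF Z ik] clust_mats_entry[OF Z' ik] cl[OF ik(1)] by simp
    qed
  qed
  have sub: "f ` clust_mats M K \<subseteq> {..<M} \<rightarrow>\<^sub>E {..<K}"
    by (auto simp: image_subset_iff f_def restrict_PiE_iff cluster_of_less)
  have fin: "finite ({..<M} \<rightarrow>\<^sub>E {..<K})" by (intro finite_PiE) auto
  show "finite (clust_mats M K)"
    using inj sub fin by (rule inj_on_finite)
  have "card (clust_mats M K) \<le> card ({..<M} \<rightarrow>\<^sub>E {..<K})"
    using inj sub fin by (rule card_inj_on_le)
  then show "card (clust_mats M K) \<le> K^M" by (simp add: card_PiE)
qed

section \<open>The quadratic form in coordinates\<close>

lemma sum_lessThan_mult_split:
  fixes f :: "nat \<Rightarrow> 'a::comm_monoid_add"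
  shows "(\<Sum>k<n*M. f k) = (\<Sum>m<M. \<Sum>j<n. f (m*n+j))"
proof -
  have "(\<Sum>k<n*M. f k) = (\<Sum>m<M. \<Sum>k\<in>{m*n..<m*n+n}. f k)"
    using sum.nat_group[of f n M] by (simp add: mult.commute)
  also have "\<dots> = (\<Sum>m<M. \<Sum>j<n. f (m*n+j))"
  proof (rule sum.cong[OF refl])
    fix m
    show "(\<Sum>k\<in>{m*n..<m*n+n}. f k) = (\<Sum>j<n. f (m*n+j))"
      using sum.shift_bounds_nat_ivl[of f 0 "m*n" n] by (simp add: add.commute atLeast0LessThan)
  qed
  finally show ?thesis .
qed

lemma block_index_less:
  fixes m M j n :: nat
  assumes "m < M" "j < n"
  shows "m*n+j < M*n"
proof -
  have "(m+1)*n \<le> M*n" using assms by (intro mult_le_mono1) simp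
  then show ?thesis using assms by (simp add: algebra_simps)
qed

definition masked :: "nat set \<Rightarrow> (nat \<Rightarrow> real) \<Rightarrow> nat \<Rightarrow> real" where
  "masked J \<nu> j = (if j \<in> J then \<nu> j else 0)"

lemma sum_sq_masked:
  assumes "J \<subseteq> {..<n}"
  shows "(\<Sum>j<n. (masked J \<nu> j)^2) = (\<Sum>j\<in>J. (\<nu> j)^2)"
proof -
  have "(\<Sum>j<n. (masked J \<nu> j)^2) = (\<Sum>j\<in>{..<n}. if j \<in> J then (\<nu> j)^2 else 0)"
    by (intro sum.cong) (auto simp: masked_def)
  also have "\<dots> = (\<Sum>j\<in>J. (\<nu> j)^2)"
    using assms by (simp add: sum.If_cases Int_absorb1)
  finally show ?thesis .
qed

lemma W_mat_mult_mat_diag: "W_mat n J * mat_diag n \<nu> = mat_diag n (masked J \<nu>)"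
  unfolding W_mat_def mat_diag_diag by (auto intro!: eq_matI simp: mat_diag_def masked_def)

definition quad_mat :: "nat \<Rightarrow> real mat \<Rightarrow> (nat \<Rightarrow> real) \<Rightarrow> real mat \<Rightarrow> nat set \<Rightarrow> real mat" where
  "quad_mat n S \<nu> Z J = kron (proj_clust Z) (W_mat n J * mat_diag n \<nu> * S)"

lemma quad_mat_carrier:
  assumes Z: "Z \<in> clust_mats M K" and S: "S \<in> carrier_mat n n"
  shows "quad_mat n S \<nu> Z J \<in> carrier_mat (n*M) (n*M)"
  using proj_clust_carrier[OF Z] S
  unfolding quad_mat_def kron_def W_mat_mult_mat_diag by (auto simp: mult.commute mat_diag_def)

lemma quad_mat_entry:
  assumes Z: "Z \<in> clust_mats M K" and S: "S \<in> carrier_mat n n"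
    and m: "m < M" "m' < M" and j: "j < n" "j' < n"
  shows "quad_mat n S \<nu> Z J $$ (m*n+j, m'*n+j') = proj_clust Z $$ (m,m') * (masked J \<nu> j * S $$ (j,j'))"
proof -
  have "dim_row (proj_clust Z) = M" "dim_col (proj_clust Z) = M"
    using proj_clust_carrier[OF Z] by auto
  moreover have "m*n+j < M*n" "m'*n+j' < M*n" using block_index_less m j by auto
  ultimately show ?thesis
    unfolding quad_mat_def kron_def W_mat_mult_mat_diag mat_diag_mult_left[OF S]
    using S j by (simp add: mult.commute)
qed

lemma quad_eq_sum:
  assumes Z: "Z \<in> clust_mats M K" and S: "S \<in> carrier_mat n n"
  shows "quad n M S \<nu> Z J \<eta> = (\<Sum>r<n*M. (\<Sum>k<n*M. quad_mat n S \<nu> Z J $$ (r,k) * \<eta> k)^2)"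
  unfolding quad_def quad_mat_def[symmetric] by (rule sqnorm_mult_mat_vec[OF quad_mat_carrier[OF Z S]])

lemma quad_eq_0_if_op_norm_le_0:
  assumes Z: "Z \<in> clust_mats M K" and S: "S \<in> carrier_mat n n" and C: "op_norm S \<le> 0"
  shows "quad n M S \<nu> Z J \<eta> = 0"
proof -
  have "quad_mat n S \<nu> Z J $$ (r,k) = 0" if r: "r < n*M" and k: "k < n*M" for r k
  proof -
    have n: "0 < n" using r by (cases n) auto
    then have "r div n < M" "k div n < M" "r mod n < n" "k mod n < n"
      using r k by (auto simp: div_less_iff_less_mult mult.commute)
    then have "quad_mat n S \<nu> Z J $$ ((r div n)*n + r mod n, (k div n)*n + k mod n)
        = proj_clust Z $$ (r div n, k div n) * (masked J \<nu> (r mod n) * S $$ (r mod n, k mod n))"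
      by (rule quad_mat_entry[OF Z S])
    moreover have "S $$ (r mod n, k mod n) = 0"
      using \<open>r mod n < n\<close> \<open>k mod n < n\<close> by (rule op_norm_le_0_imp_zero[OF S C])
    ultimately show ?thesis by simp
  qed
  then show ?thesis by (simp add: quad_eq_sum[OF Z S])
qed

text \<open>
  The matrix V = U^T \<otimes> W_J \<Upsilon> of the header, with rows indexed by pairs (c, j). Since U has
  orthonormal columns and \<Pi>_Z = U U^T, it satisfies |(\<Pi>_Z \<otimes> W_J \<Upsilon>) h| = |V h|.
\<close>

definition cluster_avg :: "nat \<Rightarrow> real mat \<Rightarrow> nat \<Rightarrow> nat \<Rightarrow> nat set \<Rightarrow> (nat \<Rightarrow> real) \<Rightarrow> nat \<times> nat \<Rightarrow> nat \<Rightarrow> real"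
  where "cluster_avg n Z M K J \<nu> q k =
    (if k mod n = snd q \<and> cluster_of Z K (k div n) = fst q
     then masked J \<nu> (snd q) / sqrt (real (cluster_size Z M K (fst q))) else 0)"

definition cluster_sum :: "nat \<Rightarrow> real mat \<Rightarrow> nat \<Rightarrow> nat \<Rightarrow> (nat \<Rightarrow> real) \<Rightarrow> nat \<Rightarrow> nat \<Rightarrow> real" where
  "cluster_sum n Z M K h j c = (\<Sum>m<M. if cluster_of Z K m = c then h (m*n+j) else 0)"

lemma cluster_avg_apply:
  assumes j: "j < n"
  shows "(\<Sum>k<n*M. cluster_avg n Z M K J \<nu> (c,j) k * h k)
    = masked J \<nu> j / sqrt (real (cluster_size Z M K c)) * cluster_sum n Z M K h j c"
proof -
  have "(\<Sum>j'<n. cluster_avg n Z M K J \<nu> (c,j) (m*n+j') * h (m*n+j'))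
      = (if cluster_of Z K m = c then masked J \<nu> j / sqrt (real (cluster_size Z M K c)) * h (m*n+j) else 0)"
    for m
  proof -
    have "(\<Sum>j'<n. cluster_avg n Z M K J \<nu> (c,j) (m*n+j') * h (m*n+j'))
        = (\<Sum>j'<n. if j' = j then (if cluster_of Z K m = c
             then masked J \<nu> j / sqrt (real (cluster_size Z M K c)) * h (m*n+j) else 0) else 0)"
      by (intro sum.cong refl) (auto simp: cluster_avg_def)
    then show ?thesis using j by simp
  qed
  then have "(\<Sum>k<n*M. cluster_avg n Z M K J \<nu> (c,j) k * h k)
      = (\<Sum>m<M. if cluster_of Z K m = c then masked J \<nu> j / sqrt (real (cluster_size Z M K c)) * h (m*n+j) else 0)"
    by (simp add: sum_lessThan_mult_split)
  also have "\<dots> = masked J \<nu> j / sqrt (real (cluster_size Z M K c)) * cluster_sum n Z M K h j c"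
    unfolding cluster_sum_def sum_distrib_left by (intro sum.cong refl) simp
  finally show ?thesis .
qed

lemma sum_sq_cluster_avg_transpose:
  assumes Z: "Z \<in> clust_mats M K"
  shows "(\<Sum>k<n*M. (\<Sum>q\<in>{..<K}\<times>{..<n}. cluster_avg n Z M K J \<nu> q k * g q)^2)
       = (\<Sum>q\<in>{..<K}\<times>{..<n}. (masked J \<nu> (snd q))^2 * (g q)^2)"
proof -
  let ?d = "masked J \<nu>" and ?cl = "cluster_of Z K" and ?sz = "\<lambda>c. real (cluster_size Z M K c)"
  have "(\<Sum>q\<in>{..<K}\<times>{..<n}. cluster_avg n Z M K J \<nu> q (m*n+j) * g q)
      = ?d j / sqrt (?sz (?cl m)) * g (?cl m, j)" if m: "m < M" and j: "j < n" for m j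
  proof -
    have "(\<Sum>q\<in>{..<K}\<times>{..<n}. cluster_avg n Z M K J \<nu> q (m*n+j) * g q)
        = (\<Sum>q\<in>{..<K}\<times>{..<n}. if q = (?cl m, j) then ?d j / sqrt (?sz (?cl m)) * g (?cl m, j) else 0)"
      using j by (intro sum.cong refl) (auto simp: cluster_avg_def)
    then show ?thesis using cluster_of_less[OF Z m] j by (simp add: sum.delta')
  qed
  then have "(\<Sum>k<n*M. (\<Sum>q\<in>{..<K}\<times>{..<n}. cluster_avg n Z M K J \<nu> q k * g q)^2)
      = (\<Sum>j<n. \<Sum>m<M. (?d j)^2 * (g (?cl m, j))^2 / ?sz (?cl m))"
    using cluster_size_pos[OF Z] cluster_of_less[OF Z]
    by (simp add: sum_lessThan_mult_split power_mult_distrib power_divide sum.swap[of _ "{..<M}"])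
  also have "\<dots> = (\<Sum>j<n. \<Sum>c<K. (?d j)^2 * (g (c, j))^2)"
    by (intro sum.cong refl sum_over_clusters[OF Z])
  also have "\<dots> = (\<Sum>c<K. \<Sum>j<n. (?d j)^2 * (g (c, j))^2)"
    by (rule sum.swap)
  also have "\<dots> = (\<Sum>q\<in>{..<K}\<times>{..<n}. (?d (snd q))^2 * (g q)^2)"
    by (simp add: sum.cartesian_product case_prod_unfold)
  finally show ?thesis .
qed

lemma quad_mat_transpose_apply:
  assumes Z: "Z \<in> clust_mats M K" and S: "S \<in> carrier_mat n n" and m': "m' < M" and j': "j' < n"
  shows "(\<Sum>r<n*M. quad_mat n S \<nu> Z J $$ (r, m'*n+j') * h r)
    = (\<Sum>j<n. S $$ (j,j') * (masked J \<nu> j * cluster_sum n Z M K h j (cluster_of Z K m')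
                              / real (cluster_size Z M K (cluster_of Z K m'))))"
proof -
  have "(\<Sum>r<n*M. quad_mat n S \<nu> Z J $$ (r, m'*n+j') * h r)
      = (\<Sum>j<n. \<Sum>m<M. proj_clust Z $$ (m,m') * (masked J \<nu> j * S $$ (j,j')) * h (m*n+j))"
    using m' j' by (simp add: sum_lessThan_mult_split quad_mat_entry[OF Z S] sum.swap[of _ "{..<M}"])
  also have "\<dots> = (\<Sum>j<n. S $$ (j,j') * (masked J \<nu> j * (\<Sum>m<M. proj_clust Z $$ (m,m') * h (m*n+j))))"
    by (simp add: sum_distrib_left mult_ac)
  finally show ?thesis
    using m' by (simp add: sum_proj_clust[OF Z] cluster_sum_def)
qed

lemma sum_sq_quad_mat_transpose_le:
  assumes Z: "Z \<in> clust_mats M K" and S: "S \<in> carrier_mat n n" and C: "op_norm S \<le> C"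
  shows "(\<Sum>k<n*M. (\<Sum>r<n*M. quad_mat n S \<nu> Z J $$ (r,k) * h r)^2)
     \<le> C^2 * (\<Sum>q\<in>{..<K}\<times>{..<n}. (\<Sum>k<n*M. cluster_avg n Z M K J \<nu> q k * h k)^2)"
proof -
  let ?d = "masked J \<nu>" and ?cl = "cluster_of Z K" and ?sz = "\<lambda>c. real (cluster_size Z M K c)"
  let ?Q = "cluster_sum n Z M K h"
  define y where "y m' j = ?d j * ?Q j (?cl m') / ?sz (?cl m')" for m' j
  have "(\<Sum>k<n*M. (\<Sum>r<n*M. quad_mat n S \<nu> Z J $$ (r,k) * h r)^2)
      = (\<Sum>m'<M. \<Sum>j'<n. (\<Sum>j<n. S $$ (j,j') * y m' j)^2)"
    by (subst sum_lessThan_mult_split)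
      (intro sum.cong refl; simp add: quad_mat_transpose_apply[OF Z S] y_def)
  also have "\<dots> \<le> (\<Sum>m'<M. C^2 * (\<Sum>j<n. (y m' j)^2))"
    by (intro sum_mono sum_sq_mult_transpose_le_op_norm[OF S C])
  also have "\<dots> = C^2 * (\<Sum>j<n. \<Sum>m'<M. ((?d j)^2 * (?Q j (?cl m'))^2 / ?sz (?cl m')) / ?sz (?cl m'))"
    by (simp add: sum_distrib_left sum.swap[of _ "{..<M}"] y_def power_mult_distrib power_divide
        power2_eq_square mult_ac)
  also have "\<dots> = C^2 * (\<Sum>j<n. \<Sum>c<K. (?d j)^2 * (?Q j c)^2 / ?sz c)"
    by (intro arg_cong[where f = "\<lambda>x. C^2 * x"] sum.cong refl sum_over_clusters[OF Z])
  also have "\<dots> = C^2 * (\<Sum>c<K. \<Sum>j<n. (\<Sum>k<n*M. cluster_avg n Z M K J \<nu> (c,j) k * h k)^2)"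
    using cluster_size_pos[OF Z]
    by (subst sum.swap) (simp add: cluster_avg_apply power_mult_distrib power_divide)
  also have "\<dots> = C^2 * (\<Sum>q\<in>{..<K}\<times>{..<n}. (\<Sum>k<n*M. cluster_avg n Z M K J \<nu> q k * h k)^2)"
    by (simp add: sum.cartesian_product)
  finally show ?thesis .
qed

section \<open>Moment generating function and tail bound\<close>

lemma gauss_space_eq: "gauss_space m = std_gauss {..<m}"
  unfolding gauss_space_def ..

lemma prob_space_gauss_space: "prob_space (gauss_space m)"
  unfolding gauss_space_eq by (rule prob_space_std_gauss)

lemma quad_measurable:
  assumes Z: "Z \<in> clust_mats M K" and S: "S \<in> carrier_mat n n"
  shows "quad n M S \<nu> Z J \<in> borel_measurable (gauss_space (n*M))"
  unfolding quad_eq_sum[OF Z S, abs_def] gauss_space_eq by measurable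

lemma nn_integral_exp_quad_le:
  assumes Z: "Z \<in> clust_mats M K" and S: "S \<in> carrier_mat n n" and C: "op_norm S \<le> C"
    and \<theta>: "0 \<le> \<theta>" and small: "\<And>j. j < n \<Longrightarrow> 2*(\<theta>*C^2)*(masked J \<nu> j)^2 \<le> 2/3"
  shows "(\<integral>\<^sup>+\<eta>. ennreal (exp (\<theta> * quad n M S \<nu> Z J \<eta>)) \<partial>gauss_space (n*M))
    \<le> ennreal (exp (2*(\<theta>*C^2)*(real K * (\<Sum>j<n. (masked J \<nu> j)^2))))"
proof -
  let ?B = "quad_mat n S \<nu> Z J" and ?V = "cluster_avg n Z M K J \<nu>"
    and ?N = "{..<n*M}" and ?Q = "{..<K}\<times>{..<n}"
  have "(\<integral>\<^sup>+\<eta>. ennreal (exp (\<theta> * quad n M S \<nu> Z J \<eta>)) \<partial>gauss_space (n*M))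
     = (\<integral>\<^sup>+h. ennreal (exp (\<theta> * (\<Sum>k\<in>?N. (\<Sum>r\<in>?N. ?B $$ (r,k) * h r)^2))) \<partial>std_gauss ?N)"
    unfolding quad_eq_sum[OF Z S] gauss_space_eq
    by (rule std_gauss_exp_sq_transpose) (use \<theta> in auto)
  also have "\<dots> \<le> (\<integral>\<^sup>+h. ennreal (exp ((\<theta>*C^2) * (\<Sum>q\<in>?Q. (\<Sum>k\<in>?N. ?V q k * h k)^2))) \<partial>std_gauss ?N)"
    using sum_sq_quad_mat_transpose_le[OF Z S C] \<theta>
    by (intro nn_integral_mono ennreal_leI) (simp add: mult_left_mono mult.assoc)
  also have "\<dots> = (\<integral>\<^sup>+g. ennreal (exp ((\<theta>*C^2) * (\<Sum>k\<in>?N. (\<Sum>q\<in>?Q. ?V q k * g q)^2))) \<partial>std_gauss ?Q)"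
    by (rule std_gauss_exp_sq_transpose) (use \<theta> in auto)
  also have "\<dots> = (\<integral>\<^sup>+g. ennreal (exp ((\<theta>*C^2) * (\<Sum>q\<in>?Q. (masked J \<nu> (snd q))^2 * (g q)^2))) \<partial>std_gauss ?Q)"
    by (simp add: sum_sq_cluster_avg_transpose[OF Z])
  also have "\<dots> \<le> ennreal (exp (2*(\<theta>*C^2)*(\<Sum>q\<in>?Q. (masked J \<nu> (snd q))^2)))"
    by (rule std_gauss_exp_weighted_sq_le) (use \<theta> small in auto)
  also have "(\<Sum>q\<in>?Q. (masked J \<nu> (snd q))^2) = (\<Sum>c<K. \<Sum>j<n. (masked J \<nu> j)^2)"
    by (simp only: sum.cartesian_product case_prod_unfold)
  also have "\<dots> = real K * (\<Sum>j<n. (masked J \<nu> j)^2)"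
    by simp
  finally show ?thesis .
qed

lemma emeasure_greater_le_exp_nn_integral:
  assumes X: "X \<in> borel_measurable M" and \<theta>: "0 \<le> \<theta>"
  shows "emeasure M {x \<in> space M. a < X x} \<le> ennreal (exp (-(\<theta>*a))) * (\<integral>\<^sup>+x. ennreal (exp (\<theta> * X x)) \<partial>M)"
proof -
  have "emeasure M {x \<in> space M. a < X x} = (\<integral>\<^sup>+x. indicator {x \<in> space M. a < X x} x \<partial>M)"
    using X by simp
  also have "\<dots> \<le> (\<integral>\<^sup>+x. ennreal (exp (-(\<theta>*a))) * ennreal (exp (\<theta> * X x)) \<partial>M)"
  proof (intro nn_integral_mono)
    fix x
    have "a < X x \<Longrightarrow> 1 \<le> exp (-(\<theta>*a)) * exp (\<theta> * X x)"
      using \<theta> by (simp add: exp_add[symmetric] mult_left_mono)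
    then show "indicator {x \<in> space M. a < X x} x \<le> ennreal (exp (-(\<theta>*a))) * ennreal (exp (\<theta> * X x))"
      by (auto simp: indicator_def ennreal_mult[symmetric] simp flip: ennreal_1 intro: ennreal_leI)
  qed
  also have "\<dots> = ennreal (exp (-(\<theta>*a))) * (\<integral>\<^sup>+x. ennreal (exp (\<theta> * X x)) \<partial>M)"
    using X by (intro nn_integral_cmult) measurable
  finally show ?thesis .
qed

lemma quad_tail_emeasure:
  assumes Z: "Z \<in> clust_mats M K" and S: "S \<in> carrier_mat n n" and C: "op_norm S \<le> C"
    and s: "0 < s" and s_ge: "\<And>j. j < n \<Longrightarrow> C^2 * (masked J \<nu> j)^2 \<le> s"
  shows "emeasure (gauss_space (n*M)) {\<eta> \<in> space (gauss_space (n*M)).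
      2 * real K * C^2 * (\<Sum>j<n. (masked J \<nu> j)^2) + 3 * s * x < quad n M S \<nu> Z J \<eta>}
     \<le> ennreal (exp (-x))"
proof -
  define \<theta> where "\<theta> = 1/(3 * s)"
  define a where "a = 2 * real K * C^2 * (\<Sum>j<n. (masked J \<nu> j)^2) + 3 * s * x"
  have \<theta>: "0 \<le> \<theta>" using s by (simp add: \<theta>_def)
  have small: "2*(\<theta>*C^2)*(masked J \<nu> j)^2 \<le> 2/3" if "j < n" for j
    using s_ge[OF that] s by (simp add: \<theta>_def field_simps)
  have "emeasure (gauss_space (n*M)) {\<eta> \<in> space (gauss_space (n*M)). a < quad n M S \<nu> Z J \<eta>}
      \<le> ennreal (exp (-(\<theta>*a))) * ennreal (exp (2*(\<theta>*C^2)*(real K * (\<Sum>j<n. (masked J \<nu> j)^2))))"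
    using emeasure_greater_le_exp_nn_integral[OF quad_measurable[OF Z S] \<theta>]
      nn_integral_exp_quad_le[OF Z S C \<theta> small]
    by (meson order_trans mult_left_mono zero_le)
  also have "\<dots> = ennreal (exp (-x))"
    using s by (simp add: ennreal_mult[symmetric] exp_add[symmetric] a_def \<theta>_def field_simps)
  finally show ?thesis unfolding a_def .
qed

section \<open>Union bounds\<close>

lemma (in prob_space) avoid_finitely_many_events:
  assumes "finite I" and "A ` I \<subseteq> events" and "(\<Sum>i\<in>I. prob (A i)) \<le> \<epsilon>"
  shows "\<exists>\<Omega>\<in>events. 1 - \<epsilon> \<le> prob \<Omega> \<and> (\<forall>\<omega>\<in>\<Omega>. \<omega> \<in> space M \<and> (\<forall>i\<in>I. \<omega> \<notin> A i))"
proof (intro bexI conjI)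
  have "prob (\<Union>i\<in>I. A i) \<le> \<epsilon>"
    using finite_measure_subadditive_finite[OF assms(1,2)] assms(3) by linarith
  moreover have "(\<Union>i\<in>I. A i) \<in> events" using assms by auto
  ultimately show "1 - \<epsilon> \<le> prob (space M - (\<Union>i\<in>I. A i))"
    by (simp add: prob_compl)
qed (use assms in auto)

lemma pow_div_fact_le_exp:
  fixes x :: real
  assumes "0 \<le> x"
  shows "x^k / fact k \<le> exp x"
proof -
  have "(\<Sum>n\<in>{k}. x^n / fact n) \<le> (\<Sum>n. x^n / fact n)"
    using summable_exp[of x] assms by (intro sum_le_suminf) (auto simp: divide_inverse mult.commute)
  also have "\<dots> = exp x"
    by (simp add: exp_def divide_inverse mult.commute)
  finally show ?thesis by simp
qed

lemma binomial_mult_pow_le_1: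
  assumes "1 \<le> L" "L \<le> n"
  shows "real (n choose L) * (real L / (real n * exp 1))^L \<le> 1"
proof -
  have n: "0 < real n" using assms by simp
  have "real (n choose L) * (real L / (real n * exp 1))^L
      = (real (n choose L) * fact L) * ((real L)^L / fact L) / (real n ^ L * exp (real L))"
    by (simp add: power_divide power_mult_distrib exp_of_nat_mult[symmetric] mult.commute)
  also have "\<dots> \<le> (real n ^ L) * exp (real L) / (real n ^ L * exp (real L))"
  proof (intro divide_right_mono mult_mono)
    show "real (n choose L) * fact L \<le> real n ^ L"
      using binomial_fact_pow[of n L] by (metis of_nat_fact of_nat_le_iff of_nat_mult of_nat_power)
  qed (simp_all add: pow_div_fact_le_exp)
  also have "\<dots> = 1" using n by simp
  finally show ?thesis .
qed

lemma sum_nonempty_subsets_weight_le: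
  "(\<Sum>J\<in>{J. J \<subseteq> {..<n} \<and> J \<noteq> {}}. (real (card J) / (real n * exp 1))^(card J)) \<le> real n"
proof -
  let ?\<J> = "{J. J \<subseteq> {..<n} \<and> J \<noteq> {}}" and ?w = "\<lambda>L::nat. (real L / (real n * exp 1))^L"
  have fin: "finite ?\<J>" by (rule finite_subset[of _ "Pow {..<n}"]) auto
  have card: "card ` ?\<J> \<subseteq> {1..n}"
    using card_mono[of "{..<n}"] by (auto simp: Suc_le_eq card_gt_0_iff dest: finite_subset)
  have "(\<Sum>J\<in>?\<J>. ?w (card J)) = (\<Sum>L\<in>{1..n}. \<Sum>J\<in>{J \<in> ?\<J>. card J = L}. ?w (card J))"
    by (rule sum.group[symmetric, OF fin _ card]) simp
  also have "\<dots> = (\<Sum>L\<in>{1..n}. real (n choose L) * ?w L)"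
  proof (intro sum.cong refl)
    fix L assume "L \<in> {1..n}"
    then have "{J \<in> ?\<J>. card J = L} = {J. J \<subseteq> {..<n} \<and> card J = L}" by auto
    then show "(\<Sum>J\<in>{J \<in> ?\<J>. card J = L}. ?w (card J)) = real (n choose L) * ?w L"
      using n_subsets[of "{..<n}" L] by simp
  qed
  also have "\<dots> \<le> (\<Sum>L\<in>{1..n}. 1)"
    by (intro sum_mono binomial_mult_pow_le_1) auto
  finally show ?thesis by simp
qed

lemma exp_neg_mult_ln_div:
  assumes "1 \<le> L" "1 \<le> n"
  shows "exp (-(real L * ln (real n * exp 1 / real L))) = (real L / (real n * exp 1))^L"
proof -
  have "exp (-(real L * ln (real n * exp 1 / real L))) = exp (- ln (real n * exp 1 / real L)) ^ L"
    by (simp flip: exp_of_nat_mult)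
  also have "\<dots> = (real L / (real n * exp 1))^L"
    using assms by (simp add: exp_minus)
  finally show ?thesis .
qed

lemma sum_clust_mats_weights_le:
  fixes w :: "'j \<Rightarrow> real"
  assumes "finite \<J>" and "(\<Sum>j\<in>\<J>. w j) \<le> real n" and "1 \<le> n" and "0 \<le> c"
    and "\<And>j. j \<in> \<J> \<Longrightarrow> 0 \<le> w j"
  shows "(\<Sum>K\<in>{1..M}. \<Sum>Z\<in>clust_mats M K. \<Sum>j\<in>\<J>. c / (real K ^ M * (real M * real n)) * w j) \<le> c"
proof -
  have "(\<Sum>Z\<in>clust_mats M K. \<Sum>j\<in>\<J>. c / (real K ^ M * (real M * real n)) * w j) \<le> c / real M"
    if K: "K \<in> {1..M}" for K
  proof -
    have "(\<Sum>Z\<in>clust_mats M K. \<Sum>j\<in>\<J>. c / (real K ^ M * (real M * real n)) * w j)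
        = real (card (clust_mats M K)) * (c / (real K ^ M * (real M * real n)) * (\<Sum>j\<in>\<J>. w j))"
      by (simp add: sum_distrib_left)
    also have "\<dots> \<le> real K ^ M * (c / (real K ^ M * (real M * real n)) * real n)"
    proof (rule mult_mono)
      show "real (card (clust_mats M K)) \<le> real K ^ M"
        using card_clust_mats_le by (metis of_nat_le_iff of_nat_power)
      show "c / (real K ^ M * (real M * real n)) * (\<Sum>j\<in>\<J>. w j) \<le> c / (real K ^ M * (real M * real n)) * real n"
        using assms by (intro mult_left_mono) simp_all
    qed (use assms in \<open>simp_all add: sum_nonneg\<close>)
    also have "\<dots> = c / real M" using K assms(3) by (simp add: field_simps)
    finally show ?thesis .
  qed
  then have "(\<Sum>K\<in>{1..M}. \<Sum>Z\<in>clust_mats M K. \<Sum>j\<in>\<J>. c / (real K ^ M * (real M * real n)) * w j)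
      \<le> (\<Sum>K\<in>{1..M}. c / real M)"
    by (rule sum_mono)
  also have "\<dots> \<le> c" by (cases "M = 0") (auto simp: assms)
  finally show ?thesis .
qed

lemma exp_neg_union_cost:
  assumes "1 \<le> K" "1 \<le> n" "1 \<le> M"
  shows "exp (-(real M * ln (real K) + \<rho> + ln (real M * real n) + t))
    = exp (-t) / (real K ^ M * (real M * real n)) * exp (-\<rho>)"
  using assms by (simp add: exp_add exp_diff exp_minus exp_of_nat_mult field_simps)

definition quad_excess ::
    "nat \<Rightarrow> nat \<Rightarrow> real mat \<Rightarrow> (nat \<Rightarrow> real) \<Rightarrow> real \<Rightarrow> nat \<Rightarrow> real mat \<Rightarrow> nat set \<Rightarrow> real \<Rightarrow> (nat \<Rightarrow> real) set"
  where "quad_excess n M S \<nu> C K Z J x = {\<eta> \<in> space (gauss_space (n*M)).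
    2 * real K * C^2 * (\<Sum>j\<in>J. (\<nu> j)^2) + 3 * C^2 * (MAX j\<in>J. (\<nu> j)^2) * x < quad n M S \<nu> Z J \<eta>}"

lemma quad_excess_sets:
  assumes Z: "Z \<in> clust_mats M K" and S: "S \<in> carrier_mat n n"
  shows "quad_excess n M S \<nu> C K Z J x \<in> sets (gauss_space (n*M))"
proof -
  have [measurable]: "quad n M S \<nu> Z J \<in> borel_measurable (gauss_space (n*M))"
    by (rule quad_measurable[OF Z S])
  show ?thesis unfolding quad_excess_def by measurable
qed

lemma measure_quad_excess_le:
  assumes Z: "Z \<in> clust_mats M K" and S: "S \<in> carrier_mat n n" and C: "op_norm S \<le> C"
    and J: "J \<subseteq> {..<n}" "J \<noteq> {}" and \<nu>: "\<forall>j\<in>J. 0 < \<nu> j"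
  shows "measure (gauss_space (n*M)) (quad_excess n M S \<nu> C K Z J x) \<le> exp (-x)"
proof (cases "C = 0")
  case True
  then have "quad_excess n M S \<nu> C K Z J x = {}"
    using quad_eq_0_if_op_norm_le_0[OF Z S] C unfolding quad_excess_def by auto
  then show ?thesis by simp
next
  case False
  interpret prob_space "gauss_space (n*M)" by (rule prob_space_gauss_space)
  let ?m = "MAX j\<in>J. (\<nu> j)^2"
  have fin: "finite J" using J(1) finite_subset by blast
  have le_max: "(\<nu> j)^2 \<le> ?m" if "j \<in> J" for j using fin that by (intro Max_ge) auto
  obtain j0 where j0: "j0 \<in> J" using J(2) by auto
  then have "0 < (\<nu> j0)^2" using \<nu> by (simp add: less_imp_neq[symmetric])
  with le_max[OF j0] have "0 < ?m" by linarith
  have s_ge: "C^2 * (masked J \<nu> j)^2 \<le> C^2 * ?m" for j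
    using le_max \<open>0 < ?m\<close> by (intro mult_left_mono) (auto simp: masked_def)
  have "emeasure (gauss_space (n*M)) (quad_excess n M S \<nu> C K Z J x) \<le> ennreal (exp (-x))"
    using quad_tail_emeasure[OF Z S C _ s_ge, of x] False \<open>0 < ?m\<close>
    unfolding quad_excess_def sum_sq_masked[OF J(1)] by (simp add: mult.assoc)
  then show ?thesis by (simp add: emeasure_eq_measure)
qed

lemma quad_bound_single:
  assumes Z: "Z \<in> clust_mats M K" and S: "S \<in> carrier_mat n n" and C: "op_norm S \<le> C"
    and J: "J \<subseteq> {..<n}" "J \<noteq> {}" and \<nu>: "\<forall>j\<in>J. 0 < \<nu> j"
  shows "\<exists>\<Omega>\<in>sets (gauss_space (n*M)). 1 - exp (-x) \<le> measure (gauss_space (n*M)) \<Omega> \<and>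
    (\<forall>\<eta>\<in>\<Omega>. quad n M S \<nu> Z J \<eta> \<le>
       2 * real K * C^2 * (\<Sum>j\<in>J. (\<nu> j)^2) + 3 * C^2 * (MAX j\<in>J. (\<nu> j)^2) * x)"
proof -
  interpret prob_space "gauss_space (n*M)" by (rule prob_space_gauss_space)
  have "\<exists>\<Omega>\<in>events. 1 - exp (-x) \<le> prob \<Omega> \<and>
      (\<forall>\<eta>\<in>\<Omega>. \<eta> \<in> space (gauss_space (n*M)) \<and> (\<forall>i\<in>{()}. \<eta> \<notin> quad_excess n M S \<nu> C K Z J x))"
    using quad_excess_sets[OF Z S] measure_quad_excess_le[OF Z S C J \<nu>]
    by (intro avoid_finitely_many_events) auto
  then show ?thesis unfolding quad_excess_def by (auto simp: not_less)
qed

text \<open>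
  The cost \<rho> j pays for the choice of the index j, the term M ln K for the at most K^M
  clustering matrices, and ln (M n) for the choice of K and the normalisation of the costs.
\<close>

lemma quad_bound_simultaneous:
  fixes \<J> :: "'j set" and Js :: "'j \<Rightarrow> nat set" and \<rho> :: "'j \<Rightarrow> real"
  assumes S: "S \<in> carrier_mat n n" and C: "op_norm S \<le> C" and \<nu>: "\<forall>j<n. 0 < \<nu> j"
    and n: "1 \<le> n" and M: "1 \<le> M"
    and \<J>: "finite \<J>" "\<And>j. j \<in> \<J> \<Longrightarrow> Js j \<subseteq> {..<n} \<and> Js j \<noteq> {}"
    and \<rho>: "(\<Sum>j\<in>\<J>. exp (-\<rho> j)) \<le> real n"
  shows "\<exists>\<Omega>\<in>sets (gauss_space (n*M)). 1 - exp (-t) \<le> measure (gauss_space (n*M)) \<Omega> \<and>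
    (\<forall>\<eta>\<in>\<Omega>. \<forall>K\<in>{1..M}. \<forall>Z\<in>clust_mats M K. \<forall>j\<in>\<J>.
       quad n M S \<nu> Z (Js j) \<eta> \<le> 2 * real K * C^2 * (\<Sum>i\<in>Js j. (\<nu> i)^2)
         + 3 * C^2 * (MAX i\<in>Js j. (\<nu> i)^2) * (real M * ln (real K) + \<rho> j + ln (real M * real n) + t))"
proof -
  interpret prob_space "gauss_space (n*M)" by (rule prob_space_gauss_space)
  define x where "x K j = real M * ln (real K) + \<rho> j + ln (real M * real n) + t" for K j
  define I where "I = (SIGMA K:{1..M}. clust_mats M K \<times> \<J>)"
  define A where "A = (\<lambda>(K, Z, j). quad_excess n M S \<nu> C K Z (Js j) (x K j))"
  have fin: "finite I" unfolding I_def using \<J>(1) finite_clust_mats by auto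
  have events: "A ` I \<subseteq> events" unfolding A_def I_def using quad_excess_sets[OF _ S] by auto
  have "(\<Sum>i\<in>I. prob (A i)) \<le> (\<Sum>(K, Z, j)\<in>I. exp (- x K j))"
    unfolding A_def I_def using \<J>(2) \<nu>
    by (intro sum_mono) (auto intro!: measure_quad_excess_le[OF _ S C])
  also have "\<dots> = (\<Sum>K\<in>{1..M}. \<Sum>Z\<in>clust_mats M K. \<Sum>j\<in>\<J>. exp (- x K j))"
    unfolding I_def using \<J>(1) finite_clust_mats
    by (simp add: sum.Sigma[symmetric] sum.cartesian_product[symmetric])
  also have "\<dots> = (\<Sum>K\<in>{1..M}. \<Sum>Z\<in>clust_mats M K. \<Sum>j\<in>\<J>.
      exp (-t) / (real K ^ M * (real M * real n)) * exp (-\<rho> j))"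
  proof (intro sum.cong refl)
    fix K j assume "K \<in> {1..M}"
    then show "exp (- x K j) = exp (-t) / (real K ^ M * (real M * real n)) * exp (-\<rho> j)"
      unfolding x_def using n M by (intro exp_neg_union_cost) auto
  qed
  also have "\<dots> \<le> exp (-t)"
    using \<J>(1) \<rho> n by (intro sum_clust_mats_weights_le) auto
  finally have "(\<Sum>i\<in>I. prob (A i)) \<le> exp (-t)" .
  from avoid_finitely_many_events[OF fin events this]
  obtain \<Omega> where \<Omega>: "\<Omega> \<in> events" "1 - exp (-t) \<le> prob \<Omega>"
    and avoid: "\<forall>\<eta>\<in>\<Omega>. \<eta> \<in> space (gauss_space (n*M)) \<and> (\<forall>i\<in>I. \<eta> \<notin> A i)"
    by blast
  have "quad n M S \<nu> Z (Js j) \<eta> \<le> 2 * real K * C^2 * (\<Sum>i\<in>Js j. (\<nu> i)^2)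
      + 3 * C^2 * (MAX i\<in>Js j. (\<nu> i)^2) * x K j"
    if "\<eta> \<in> \<Omega>" "K \<in> {1..M}" "Z \<in> clust_mats M K" "j \<in> \<J>" for \<eta> K Z j
  proof -
    have "(K, Z, j) \<in> I" unfolding I_def using that by auto
    then have "\<eta> \<in> space (gauss_space (n*M))" "\<eta> \<notin> quad_excess n M S \<nu> C K Z (Js j) (x K j)"
      using avoid that(1) unfolding A_def by auto
    then show ?thesis unfolding quad_excess_def by (simp add: not_less)
  qed
  then show ?thesis
    using \<Omega> unfolding x_def by blast
qed

lemma Max_sq_lessThan_mono:
  fixes \<nu> :: "nat \<Rightarrow> real"
  assumes mono: "\<forall>i j. i \<le> j \<and> j < n \<longrightarrow> \<nu> i \<le> \<nu> j" and \<nu>: "\<forall>j<n. 0 \<le> \<nu> j" and L: "L \<in> {1..n}"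
  shows "(MAX j\<in>{..<L}. (\<nu> j)^2) = (\<nu> (L - 1))^2"
proof (rule Max_eqI)
  fix y assume "y \<in> (\<lambda>j. (\<nu> j)^2) ` {..<L}"
  then obtain j where j: "j < L" "y = (\<nu> j)^2" by auto
  have "j \<le> L - 1" "L - 1 < n" "j < n" using j(1) L by auto
  then have "\<nu> j \<le> \<nu> (L - 1)" "0 \<le> \<nu> j" using mono \<nu> by blast+
  then show "y \<le> (\<nu> (L - 1))^2" unfolding j(2) by (rule power_mono)
qed (use L in auto)

theorem lemma1:
  fixes \<delta> \<tau> C\<psi> :: real and n M :: nat and S :: "real mat" and \<nu> :: "nat \<Rightarrow> real"
  assumes "0 < \<delta>" "\<delta> < 1" "0 < \<tau>" "1 \<le> n" "1 \<le> M"
    and "S \<in> carrier_mat n n" "op_norm S \<le> C\<psi>"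
    and "\<forall>j<n. 0 < \<nu> j"
  shows
   "(\<forall>K\<in>{1..M}. \<forall>Z\<in>clust_mats M K. \<forall>J. J \<subseteq> {..<n} \<and> J \<noteq> {} \<longrightarrow>
      (\<exists>\<Omega>\<in>sets (gauss_space (n*M)). measure (gauss_space (n*M)) \<Omega> \<ge> 1 - \<delta> powr \<tau> \<and>
        (\<forall>\<eta>\<in>\<Omega>. quad n M S \<nu> Z J \<eta> \<le>
           2 * K * C\<psi>^2 * (\<Sum>j\<in>J. (\<nu> j)^2)
           + 3 * C\<psi>^2 * (MAX j\<in>J. (\<nu> j)^2) * \<tau> * ln (1/\<delta>))))
  \<and> (\<exists>\<Omega>\<in>sets (gauss_space (n*M)). measure (gauss_space (n*M)) \<Omega> \<ge> 1 - \<delta> powr \<tau> \<and>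
       (\<forall>\<eta>\<in>\<Omega>. \<forall>K\<in>{1..M}. \<forall>Z\<in>clust_mats M K. \<forall>J. J \<subseteq> {..<n} \<and> J \<noteq> {} \<longrightarrow>
          quad n M S \<nu> Z J \<eta> \<le>
           2 * K * C\<psi>^2 * (\<Sum>j\<in>J. (\<nu> j)^2)
           + 3 * C\<psi>^2 * (MAX j\<in>J. (\<nu> j)^2) *
             (M * ln K + card J * ln (n * exp 1 / card J) + ln (M * n) + \<tau> * ln (1/\<delta>))))
  \<and> ((\<forall>i j. i \<le> j \<and> j < n \<longrightarrow> \<nu> i \<le> \<nu> j) \<longrightarrow>
       (\<forall>K\<in>{1..M}. \<forall>Z\<in>clust_mats M K. \<forall>L\<in>{1..n}.
          (\<exists>\<Omega>\<in>sets (gauss_space (n*M)). measure (gauss_space (n*M)) \<Omega> \<ge> 1 - \<delta> powr \<tau> \<and>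
            (\<forall>\<eta>\<in>\<Omega>. quad n M S \<nu> Z {..<L} \<eta> \<le>
               2 * K * C\<psi>^2 * (\<Sum>j<L. (\<nu> j)^2)
               + 3 * C\<psi>^2 * \<tau> * ln (1/\<delta>) * (\<nu> (L - 1))^2)))
     \<and> (\<exists>\<Omega>\<in>sets (gauss_space (n*M)). measure (gauss_space (n*M)) \<Omega> \<ge> 1 - \<delta> powr \<tau> \<and>
          (\<forall>\<eta>\<in>\<Omega>. \<forall>K\<in>{1..M}. \<forall>Z\<in>clust_mats M K. \<forall>L\<in>{1..n}.
             quad n M S \<nu> Z {..<L} \<eta> \<le>
               2 * K * C\<psi>^2 * (\<Sum>j<L. (\<nu> j)^2)
               + 3 * C\<psi>^2 * (\<nu> (L - 1))^2 *
                 (M * ln K + ln (M * n) + \<tau> * ln (1/\<delta>)))))"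
proof -
  let ?t = "\<tau> * ln (1/\<delta>)"
  have \<delta>: "\<delta> powr \<tau> = exp (-?t)"
    using assms(1) by (simp add: powr_def ln_div mult.commute)
  have \<nu>: "\<forall>j\<in>J. 0 < \<nu> j" if "J \<subseteq> {..<n}" for J
    using assms(8) that by auto
  have prefix: "{..<L} \<subseteq> {..<n}" "{..<L} \<noteq> {}" if "L \<in> {1..n}" for L
    using that lessThan_empty_iff by auto
  have finite_subsets: "finite {J. J \<subseteq> {..<n} \<and> J \<noteq> {}}"
    by (rule finite_subset[of _ "Pow {..<n}"]) auto
  have cost: "(\<Sum>J | J \<subseteq> {..<n} \<and> J \<noteq> {}. exp (-(real (card J) * ln (real n * exp 1 / real (card J)))))
      \<le> real n"
    using sum_nonempty_subsets_weight_le assms(4)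
    by (subst sum.cong[OF refl exp_neg_mult_ln_div]) (auto simp: Suc_le_eq card_gt_0_iff dest: finite_subset)
  note single = quad_bound_single[OF _ assms(6,7) _ _ \<nu>, where x = ?t]
  note uniform = quad_bound_simultaneous[OF assms(6,7,8,4,5), where t = ?t]
  show ?thesis
    apply (intro conjI impI)
    subgoal using single by (simp add: \<delta> mult.assoc)
    subgoal using uniform[OF finite_subsets _ cost] by (simp add: \<delta>)
    subgoal premises mono
      using single[OF _ prefix] Max_sq_lessThan_mono[OF mono] assms(8)
      by (simp add: \<delta> mult_ac less_imp_le)
    subgoal premises mono
      using uniform[of "{1..n}" "\<lambda>L. {..<L}" "\<lambda>_. 0"] prefix Max_sq_lessThan_mono[OF mono] assms(8)
      by (simp add: \<delta> less_imp_le)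
    done
qed

end
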